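(* Let $X$ be a real Banach space and $Z,Y$ closed subspaces with $Z\subseteq Y\subseteq X$. If $Z$ has property-$(HB)$ in $X$, then $Z$ has property-$(HB)$ in $Y$.
   Context: For a closed subspace $V$ of a Banach space $E$, $V^\perp=\{e^*\in E^*:e^*|_V=0\}$. $V$ has property-$(HB)$ in $E$ if there is a linear projection $P$ on $E^*$ with range $V^\perp$ and $\|P\|=1$ such that, writing $G=(I-P)(E^* )$, for every $e^*=v^\#+v^\perp$ with $v^\#\in G$, $0\neq v^\perp\in V^\perp$, one has $\|e^*\|>\|v^\#\|$ and $\|e^*\|\ge\|v^\perp\|$. *)

theory Defs
  imports "HOL-Analysis.Analysis"
begin

text \<open>The dual space of a (closed) subspace E of a real normed space 'a:
  bounded linear functionals on E, represented as functions on 'a that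
  vanish outside E (so that each functional has a unique representative).\<close>
definition dual_sp :: "'a::real_normed_vector set \<Rightarrow> ('a \<Rightarrow> real) set" where
  "dual_sp E = {f. (\<forall>x\<in>E. \<forall>y\<in>E. f (x + y) = f x + f y)
                 \<and> (\<forall>c. \<forall>x\<in>E. f (scaleR c x) = c * f x)
                 \<and> (\<exists>K. \<forall>x\<in>E. \<bar>f x\<bar> \<le> K * norm x)
                 \<and> (\<forall>x. x \<notin> E \<longrightarrow> f x = 0)}"

definition dnorm :: "'a::real_normed_vector set \<Rightarrow> ('a \<Rightarrow> real) \<Rightarrow> real" where
  "dnorm E f = Sup {\<bar>f x\<bar> | x. x \<in> E \<and> norm x \<le> 1}"

definition annih :: "'a::real_normed_vector set \<Rightarrow> 'a set \<Rightarrow> ('a \<Rightarrow> real) set" where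
  "annih V E = {f \<in> dual_sp E. \<forall>x\<in>V. f x = 0}"

definition has_HB :: "'a::real_normed_vector set \<Rightarrow> 'a set \<Rightarrow> bool" where
  "has_HB V E \<longleftrightarrow> (\<exists>P :: ('a \<Rightarrow> real) \<Rightarrow> ('a \<Rightarrow> real).
      (\<forall>f\<in>dual_sp E. P f \<in> dual_sp E)
    \<and> (\<forall>f\<in>dual_sp E. \<forall>g\<in>dual_sp E. P (\<lambda>x. f x + g x) = (\<lambda>x. P f x + P g x))
    \<and> (\<forall>c. \<forall>f\<in>dual_sp E. P (\<lambda>x. c * f x) = (\<lambda>x. c * P f x))
    \<and> (\<forall>f\<in>dual_sp E. P (P f) = P f)
    \<and> P ` dual_sp E = annih V E
    \<and> (\<forall>f\<in>dual_sp E. dnorm E (P f) \<le> dnorm E f)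
    \<and> (\<forall>g\<in>{(\<lambda>x. f x - P f x) | f. f \<in> dual_sp E}. \<forall>w\<in>annih V E. w \<noteq> (\<lambda>x. 0) \<longrightarrow>
          dnorm E (\<lambda>x. g x + w x) > dnorm E g \<and> dnorm E (\<lambda>x. g x + w x) \<ge> dnorm E w))"

end

(*
  Let P be the (HB)-projection for Z in X. Since P fixes the annihilator of Z, the complementary
  map I - P only depends on the restriction of a functional to Z. For f in Y* take any extension F
  in X* (Hahn-Banach) and put P_Y f = (P F)|Y; this is well defined, linear, idempotent with range
  the annihilator of Z in Y*, and contractive because F may be chosen norm preserving.

  For the strict inequalities, the (HB) inequalities for P say that G = (I - P) F has the least norm
  among all functionals agreeing with G on Z; hence G|Y has the same norm as G. If w is a nonzero
  element of the annihilator of Z in Y*, a norm-preserving extension K of G|Y + w differs from G by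
  a nonzero functional vanishing on Z, and the (HB) inequalities for G and K - G restrict to Y.
*)
theory Submission
  imports Defs
begin

section \<open>Hahn-Banach theorem for sublinear functionals\<close>

definition sublinear :: "('a::real_vector \<Rightarrow> real) \<Rightarrow> bool" where
  "sublinear p \<longleftrightarrow> (\<forall>x y. p (x + y) \<le> p x + p y) \<and> (\<forall>c x. 0 \<le> c \<longrightarrow> p (c *\<^sub>R x) = c * p x)"

lemma sublinear_0: "sublinear p \<Longrightarrow> p 0 = 0"
  unfolding sublinear_def by (metis mult_zero_left order_refl scaleR_zero_left)

lemma sublinear_scaled_norm: "0 \<le> K \<Longrightarrow> sublinear (\<lambda>x. K * norm x)"
  unfolding sublinear_def
  by (auto simp: norm_triangle_ineq mult_left_mono simp flip: distrib_left)

text \<open>Partial linear functionals dominated by p are represented by their graphs; domination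
  alone forces such a subspace of the product to be single-valued.\<close>
definition dominated_graph :: "('a::real_vector \<Rightarrow> real) \<Rightarrow> ('a \<times> real) set \<Rightarrow> bool" where
  "dominated_graph p S \<longleftrightarrow> subspace S \<and> (\<forall>(x, a)\<in>S. a \<le> p x)"

lemma dominated_graph_single_valued:
  assumes p: "sublinear p" and S: "dominated_graph p S" and "(x, a) \<in> S" "(x, b) \<in> S"
  shows "a = b"
proof -
  have "(0, a - b) \<in> S" "(0, b - a) \<in> S"
    using S assms(3,4) subspace_diff unfolding dominated_graph_def by fastforce+
  then have "a - b \<le> p 0" "b - a \<le> p 0"
    using S unfolding dominated_graph_def by auto
  then show "a = b"
    using sublinear_0[OF p] by simp
qed

lemma dominated_graph_Union_chain:
  assumes C: "subset.chain {S. dominated_graph p S} C" and "C \<noteq> {}"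
  shows "dominated_graph p (\<Union>C)"
proof -
  have sub: "subspace S" and dom: "\<forall>(x, a)\<in>S. a \<le> p x" if "S \<in> C" for S
    using C that unfolding subset_chain_def dominated_graph_def by blast+
  have two: "\<exists>U\<in>C. u \<in> U \<and> v \<in> U" if "u \<in> \<Union>C" "v \<in> \<Union>C" for u v
    using C that unfolding subset_chain_def by blast
  have "subspace (\<Union>C)"
    unfolding subspace_def
  proof (intro conjI ballI allI)
    show "0 \<in> \<Union>C"
      using \<open>C \<noteq> {}\<close> sub subspace_0 by blast
  next
    fix u v assume "u \<in> \<Union>C" "v \<in> \<Union>C"
    then show "u + v \<in> \<Union>C"
      using two sub subspace_add by blast
  next
    fix c u assume "u \<in> \<Union>C"
    then show "c *\<^sub>R u \<in> \<Union>C"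
      using sub subspace_scale by blast
  qed
  then show ?thesis
    using dom unfolding dominated_graph_def by blast
qed

lemma dominated_graph_extension_value:
  assumes p: "sublinear p" and S: "dominated_graph p S"
  shows "\<exists>c. \<forall>(m, a)\<in>S. a - p (m - x0) \<le> c \<and> c \<le> p (m + x0) - a"
proof -
  have sep: "a - p (m - x0) \<le> p (m' + x0) - a'" if "(m, a) \<in> S" "(m', a') \<in> S" for m a m' a'
  proof -
    have "(m + m', a + a') \<in> S"
      using S that subspace_add unfolding dominated_graph_def by fastforce
    then have "a + a' \<le> p ((m - x0) + (m' + x0))"
      using S unfolding dominated_graph_def by auto
    also have "\<dots> \<le> p (m - x0) + p (m' + x0)"
      using p unfolding sublinear_def by blast
    finally show ?thesis by simp
  qed
  define L where "L = (\<lambda>(m, a). a - p (m - x0)) ` S"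
  have "(0, 0) \<in> S"
    using S subspace_0 unfolding dominated_graph_def by (fastforce simp: zero_prod_def)
  then have "L \<noteq> {}" and "bdd_above L"
    using sep unfolding L_def bdd_above_def by fastforce+
  then have "\<forall>(m, a)\<in>S. a - p (m - x0) \<le> Sup L \<and> Sup L \<le> p (m + x0) - a"
    using sep unfolding L_def by (fastforce intro: cSup_upper cSup_least)
  then show ?thesis ..
qed

lemma subspace_add_line:
  fixes v :: "'a::real_vector"
  assumes "subspace S"
  shows "subspace {s + t *\<^sub>R v | s t. s \<in> S}"
proof -
  have "{s + t *\<^sub>R v | s t. s \<in> S} = {s + w | s w. s \<in> S \<and> w \<in> span {v}}"
    unfolding span_singleton by auto
  then show ?thesis
    using subspace_sums[OF assms subspace_span] by simp
qed

lemma dominated_graph_extend: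
  assumes p: "sublinear p" and S: "dominated_graph p S"
    and c: "\<forall>(m, a)\<in>S. a - p (m - x0) \<le> c \<and> c \<le> p (m + x0) - a"
  shows "dominated_graph p {s + t *\<^sub>R (x0, c) | s t. s \<in> S}"
proof -
  have hom: "p (t *\<^sub>R x) = t * p x" if "0 \<le> t" for t x
    using p that unfolding sublinear_def by blast
  have "subspace {s + t *\<^sub>R (x0, c) | s t. s \<in> S}"
    by (rule subspace_add_line) (use S in \<open>simp add: dominated_graph_def\<close>)
  moreover have "a + t * c \<le> p (m + t *\<^sub>R x0)" if "(m, a) \<in> S" for m a t
  proof (cases t "0::real" rule: linorder_cases)
    case less
    have "(-(1/t) *\<^sub>R m, -(1/t) * a) \<in> S"
      using S that subspace_scale[of S "(m, a)" "-(1/t)"] unfolding dominated_graph_def by simp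
    then have "-(1/t) * a - p (-(1/t) *\<^sub>R m - x0) \<le> c"
      using c by fastforce
    moreover have "-(1/t) *\<^sub>R m - x0 = -(1/t) *\<^sub>R (m + t *\<^sub>R x0)"
      using less by (simp add: algebra_simps)
    moreover have "0 \<le> -(1/t)"
      using less by simp
    ultimately have "-(1/t) * (a - p (m + t *\<^sub>R x0)) \<le> c"
      by (simp only: hom right_diff_distrib)
    then show ?thesis
      using less by (simp add: field_simps)
  next
    case equal
    then show ?thesis
      using S that unfolding dominated_graph_def by auto
  next
    case greater
    have "((1/t) *\<^sub>R m, (1/t) * a) \<in> S"
      using S that subspace_scale[of S "(m, a)" "1/t"] unfolding dominated_graph_def by simp
    then have "c \<le> p ((1/t) *\<^sub>R m + x0) - (1/t) * a"
      using c by fastforce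
    moreover have "(1/t) *\<^sub>R m + x0 = (1/t) *\<^sub>R (m + t *\<^sub>R x0)"
      using greater by (simp add: algebra_simps)
    moreover have "0 \<le> 1/t"
      using greater by simp
    ultimately have "c \<le> (1/t) * (p (m + t *\<^sub>R x0) - a)"
      by (simp only: hom right_diff_distrib)
    then show ?thesis
      using greater by (simp add: field_simps)
  qed
  ultimately show ?thesis
    unfolding dominated_graph_def by auto
qed

lemma dominated_graph_maximal_total:
  assumes p: "sublinear p" and M: "dominated_graph p M"
    and max: "\<And>S. dominated_graph p S \<Longrightarrow> M \<subseteq> S \<Longrightarrow> S = M"
  shows "x0 \<in> fst ` M"
proof -
  obtain c where c: "\<forall>(m, a)\<in>M. a - p (m - x0) \<le> c \<and> c \<le> p (m + x0) - a"
    using dominated_graph_extension_value[OF p M] by blast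
  define S where "S = {s + t *\<^sub>R (x0, c) | s t. s \<in> M}"
  have "M \<subseteq> S"
    unfolding S_def by (force intro: exI[of _ 0])
  then have "S = M"
    using max dominated_graph_extend[OF p M c] unfolding S_def by blast
  moreover have "(0, 0) \<in> M"
    using M subspace_0 unfolding dominated_graph_def by (fastforce simp: zero_prod_def)
  then have "(x0, c) \<in> S"
    unfolding S_def by (force intro: exI[of _ 1])
  ultimately show ?thesis
    by force
qed

lemma dominated_graph_total_linear:
  assumes p: "sublinear p" and M: "dominated_graph p M" and total: "fst ` M = UNIV"
  shows "\<exists>F. linear F \<and> (\<forall>x a. (x, a) \<in> M \<longrightarrow> F x = a) \<and> (\<forall>x. F x \<le> p x)"
proof -
  define F where "F x = (THE a. (x, a) \<in> M)" for x
  have graph: "F x = a \<longleftrightarrow> (x, a) \<in> M" for x a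
  proof -
    have "x \<in> fst ` M"
      using total by simp
    then obtain b where "(x, b) \<in> M"
      by (auto elim!: imageE)
    then have uniq: "\<exists>!a. (x, a) \<in> M"
      using dominated_graph_single_valued[OF p M] by blast
    show ?thesis
      unfolding F_def using the1_equality[OF uniq] theI'[OF uniq] by blast
  qed
  have sub: "subspace M" and dom: "\<forall>(x, a)\<in>M. a \<le> p x"
    using M unfolding dominated_graph_def by auto
  have in_M: "(x, F x) \<in> M" for x
    using graph by blast
  have "F (x + y) = F x + F y" for x y
    by (rule graph[THEN iffD2]) (use subspace_add[OF sub in_M in_M, of x y] in simp)
  moreover have "F (c *\<^sub>R x) = c * F x" for c x
    by (rule graph[THEN iffD2]) (use subspace_scale[OF sub in_M, of c x] in simp)
  ultimately have "linear F"
    by (simp add: linear_iff)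
  moreover have "F x \<le> p x" for x
    using dom in_M by blast
  ultimately show ?thesis
    using graph by blast
qed

lemma dominated_graph_of_functional:
  assumes Y: "subspace Y"
    and f_add: "\<forall>x\<in>Y. \<forall>y\<in>Y. f (x + y) = f x + f y"
    and f_scale: "\<forall>c. \<forall>x\<in>Y. f (c *\<^sub>R x) = c * f x"
    and f_le: "\<forall>x\<in>Y. f x \<le> p x"
  shows "dominated_graph p ((\<lambda>y. (y, f y)) ` Y)" (is "dominated_graph p ?G")
proof -
  have graph_f: "(x, f x) \<in> ?G" if "x \<in> Y" for x
    using that by (rule imageI)
  have "subspace ?G"
    unfolding subspace_def
  proof (intro conjI ballI allI)
    have "f 0 = 0"
      using f_scale subspace_0[OF Y] by (metis mult_zero_left scaleR_zero_left)
    then show "0 \<in> ?G"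
      using graph_f[OF subspace_0[OF Y]] by (simp add: zero_prod_def)
  next
    fix u v assume "u \<in> ?G" "v \<in> ?G"
    then obtain x y where "x \<in> Y" "y \<in> Y" "u = (x, f x)" "v = (y, f y)"
      by blast
    then show "u + v \<in> ?G"
      using graph_f[OF subspace_add[OF Y]] f_add by simp
  next
    fix c u assume "u \<in> ?G"
    then obtain x where "x \<in> Y" "u = (x, f x)"
      by blast
    then show "c *\<^sub>R u \<in> ?G"
      using graph_f[OF subspace_scale[OF Y]] f_scale by simp
  qed
  moreover have "\<forall>(x, a)\<in>?G. a \<le> p x"
    using f_le by auto
  ultimately show ?thesis
    unfolding dominated_graph_def by blast
qed

lemma dominated_graph_maximal_extension:
  assumes G: "dominated_graph p G"
  obtains M where "dominated_graph p M" "G \<subseteq> M"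
    "\<And>S. dominated_graph p S \<Longrightarrow> M \<subseteq> S \<Longrightarrow> S = M"
proof -
  define A where "A = {S. dominated_graph p S \<and> G \<subseteq> S}"
  have "\<exists>M\<in>A. \<forall>S\<in>A. M \<subseteq> S \<longrightarrow> S = M"
  proof (rule subset_Zorn_nonempty)
    show "A \<noteq> {}"
      using G unfolding A_def by blast
  next
    fix C assume "C \<noteq> {}" and chain: "subset.chain A C"
    then have "subset.chain {S. dominated_graph p S} C"
      unfolding A_def subset_chain_def by blast
    then have "dominated_graph p (\<Union>C)"
      using dominated_graph_Union_chain \<open>C \<noteq> {}\<close> by blast
    moreover have "G \<subseteq> \<Union>C"
      using chain \<open>C \<noteq> {}\<close> unfolding A_def subset_chain_def by blast
    ultimately show "\<Union>C \<in> A"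
      unfolding A_def by blast
  qed
  then show thesis
    using that unfolding A_def by auto
qed

theorem hahn_banach:
  fixes p :: "'a::real_vector \<Rightarrow> real"
  assumes p: "sublinear p" and Y: "subspace Y"
    and f_add: "\<forall>x\<in>Y. \<forall>y\<in>Y. f (x + y) = f x + f y"
    and f_scale: "\<forall>c. \<forall>x\<in>Y. f (c *\<^sub>R x) = c * f x"
    and f_le: "\<forall>x\<in>Y. f x \<le> p x"
  shows "\<exists>F. linear F \<and> (\<forall>x\<in>Y. F x = f x) \<and> (\<forall>x. F x \<le> p x)"
proof -
  obtain M where M: "dominated_graph p M" "(\<lambda>y. (y, f y)) ` Y \<subseteq> M"
    and max: "\<And>S. dominated_graph p S \<Longrightarrow> M \<subseteq> S \<Longrightarrow> S = M"
    using dominated_graph_maximal_extension[OF dominated_graph_of_functional[OF Y f_add f_scale f_le]]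
    by blast
  have "fst ` M = UNIV"
    using dominated_graph_maximal_total[OF p M(1) max] by blast
  then obtain F where "linear F" and graph_F: "\<And>x a. (x, a) \<in> M \<Longrightarrow> F x = a"
    and "\<forall>x. F x \<le> p x"
    using dominated_graph_total_linear[OF p M(1)] by blast
  moreover have "\<forall>x\<in>Y. F x = f x"
    using graph_F M(2) by blast
  ultimately show ?thesis
    by blast
qed

section \<open>Dual spaces of subspaces\<close>

lemma dual_sp_add:
  assumes "f \<in> dual_sp E" "g \<in> dual_sp E"
  shows "(\<lambda>x. f x + g x) \<in> dual_sp E"
proof -
  obtain K L where "\<forall>x\<in>E. \<bar>f x\<bar> \<le> K * norm x" "\<forall>x\<in>E. \<bar>g x\<bar> \<le> L * norm x"
    using assms unfolding dual_sp_def by blast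
  then have "\<forall>x\<in>E. \<bar>f x + g x\<bar> \<le> (K + L) * norm x"
    by (auto simp: distrib_right intro: order_trans[OF abs_triangle_ineq add_mono])
  then have "\<exists>K. \<forall>x\<in>E. \<bar>f x + g x\<bar> \<le> K * norm x"
    by blast
  then show ?thesis
    using assms unfolding dual_sp_def by (auto simp: algebra_simps)
qed

lemma dual_sp_scale:
  assumes "f \<in> dual_sp E"
  shows "(\<lambda>x. c * f x) \<in> dual_sp E"
proof -
  obtain K where "\<forall>x\<in>E. \<bar>f x\<bar> \<le> K * norm x"
    using assms unfolding dual_sp_def by blast
  then have "\<forall>x\<in>E. \<bar>c * f x\<bar> \<le> (\<bar>c\<bar> * K) * norm x"
    by (simp add: abs_mult mult.assoc mult_left_mono)
  then have "\<exists>K. \<forall>x\<in>E. \<bar>c * f x\<bar> \<le> K * norm x"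
    by blast
  then show ?thesis
    using assms unfolding dual_sp_def by (auto simp: algebra_simps)
qed

lemma dual_sp_diff: "f \<in> dual_sp E \<Longrightarrow> g \<in> dual_sp E \<Longrightarrow> (\<lambda>x. f x - g x) \<in> dual_sp E"
  using dual_sp_add[of f E "\<lambda>x. (-1) * g x"] dual_sp_scale[of g E "-1"] by simp

lemma dual_sp_bdd_above:
  assumes "f \<in> dual_sp E"
  shows "bdd_above {\<bar>f x\<bar> | x. x \<in> E \<and> norm x \<le> 1}"
proof -
  obtain K where K: "\<forall>x\<in>E. \<bar>f x\<bar> \<le> K * norm x"
    using assms unfolding dual_sp_def by blast
  have "\<bar>f x\<bar> \<le> \<bar>K\<bar>" if "x \<in> E" "norm x \<le> 1" for x
  proof -
    have "\<bar>f x\<bar> \<le> K * norm x"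
      using K that(1) by blast
    also have "\<dots> \<le> \<bar>K\<bar> * norm x"
      by (simp add: mult_right_mono)
    also have "\<dots> \<le> \<bar>K\<bar>"
      using that(2) by (simp add: mult_left_le)
    finally show ?thesis .
  qed
  then show ?thesis
    by (auto intro!: bdd_aboveI[of _ "\<bar>K\<bar>"])
qed

lemma dnorm_upper: "f \<in> dual_sp E \<Longrightarrow> x \<in> E \<Longrightarrow> norm x \<le> 1 \<Longrightarrow> \<bar>f x\<bar> \<le> dnorm E f"
  unfolding dnorm_def by (rule cSup_upper) (auto simp: dual_sp_bdd_above)

lemma dnorm_nonneg: "f \<in> dual_sp E \<Longrightarrow> 0 \<in> E \<Longrightarrow> 0 \<le> dnorm E f"
  using dnorm_upper[of f E 0] by simp

lemma dual_sp_0: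
  assumes "subspace E" "f \<in> dual_sp E"
  shows "f 0 = 0"
proof -
  have "f (0 *\<^sub>R 0) = 0 * f 0"
    using assms subspace_0 unfolding dual_sp_def by blast
  then show ?thesis
    by simp
qed

lemma dnorm_bound:
  assumes E: "subspace E" and f: "f \<in> dual_sp E" and x: "x \<in> E"
  shows "\<bar>f x\<bar> \<le> dnorm E f * norm x"
proof (cases "x = 0")
  case True
  then show ?thesis
    using dual_sp_0[OF E f] by simp
next
  case False
  define u where "u = (1 / norm x) *\<^sub>R x"
  have "u \<in> E" "norm u = 1"
    unfolding u_def using subspace_scale[OF E x] False by simp_all
  then have "\<bar>f u\<bar> \<le> dnorm E f"
    using dnorm_upper[OF f] by simp
  moreover have "f u = (1 / norm x) * f x"
    unfolding u_def using f x unfolding dual_sp_def by blast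
  ultimately have "\<bar>f x\<bar> / norm x \<le> dnorm E f"
    by (simp add: abs_mult)
  then show ?thesis
    using False by (simp add: divide_le_eq)
qed

lemma dnorm_le:
  assumes "0 \<in> E" "0 \<le> C" "\<forall>x\<in>E. \<bar>f x\<bar> \<le> C * norm x"
  shows "dnorm E f \<le> C"
  unfolding dnorm_def
proof (rule cSup_least)
  show "{\<bar>f x\<bar> | x. x \<in> E \<and> norm x \<le> 1} \<noteq> {}"
    using assms(1) by force
next
  fix y assume "y \<in> {\<bar>f x\<bar> | x. x \<in> E \<and> norm x \<le> 1}"
  then obtain x where "y = \<bar>f x\<bar>" "x \<in> E" "norm x \<le> 1"
    by blast
  moreover have "\<bar>f x\<bar> \<le> C * norm x"
    using assms(3) \<open>x \<in> E\<close> by blast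
  moreover have "C * norm x \<le> C"
    using assms(2) \<open>norm x \<le> 1\<close> by (simp add: mult_left_le)
  ultimately show "y \<le> C"
    by linarith
qed

lemma dnorm_mono:
  assumes "Y \<subseteq> E" "0 \<in> Y" "f \<in> dual_sp E"
  shows "dnorm Y f \<le> dnorm E f"
  unfolding dnorm_def
proof (rule cSup_subset_mono)
  show "{\<bar>f x\<bar> | x. x \<in> Y \<and> norm x \<le> 1} \<noteq> {}"
    using assms(2) by force
qed (use assms(1) dual_sp_bdd_above[OF assms(3)] in auto)

definition dual_restrict :: "'a set \<Rightarrow> ('a \<Rightarrow> real) \<Rightarrow> 'a \<Rightarrow> real" where
  "dual_restrict Y F = (\<lambda>x. if x \<in> Y then F x else 0)"

lemma dual_restrict_in_dual_sp:
  assumes Y: "subspace Y" "Y \<subseteq> E" and F: "F \<in> dual_sp E"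
  shows "dual_restrict Y F \<in> dual_sp Y"
proof -
  obtain K where "\<forall>x\<in>E. \<bar>F x\<bar> \<le> K * norm x"
    using F unfolding dual_sp_def by blast
  then have "\<exists>K. \<forall>x\<in>Y. \<bar>F x\<bar> \<le> K * norm x"
    using Y(2) by blast
  moreover have "\<forall>x\<in>Y. \<forall>y\<in>Y. F (x + y) = F x + F y" "\<forall>c. \<forall>x\<in>Y. F (c *\<^sub>R x) = c * F x"
    using F Y(2) unfolding dual_sp_def by blast+
  ultimately show ?thesis
    using subspace_add[OF Y(1)] subspace_scale[OF Y(1)]
    unfolding dual_sp_def dual_restrict_def by auto
qed

lemma dnorm_dual_restrict: "dnorm Y (dual_restrict Y F) = dnorm Y F"
  unfolding dnorm_def dual_restrict_def by (intro arg_cong[where f = Sup]) auto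

theorem norm_preserving_extension:
  assumes Y: "subspace Y" and f: "f \<in> dual_sp Y"
  shows "\<exists>F\<in>dual_sp UNIV. dual_restrict Y F = f \<and> dnorm UNIV F = dnorm Y f"
proof -
  define K where "K = dnorm Y f"
  have K: "0 \<le> K"
    unfolding K_def using dnorm_nonneg[OF f subspace_0[OF Y]] .
  have "\<forall>x\<in>Y. \<forall>y\<in>Y. f (x + y) = f x + f y" "\<forall>c. \<forall>x\<in>Y. f (c *\<^sub>R x) = c * f x"
    using f unfolding dual_sp_def by blast+
  moreover have "\<forall>x\<in>Y. f x \<le> K * norm x"
    using dnorm_bound[OF Y f] unfolding K_def by (meson abs_ge_self order_trans)
  ultimately obtain F where "linear F" and F_ext: "\<forall>x\<in>Y. F x = f x"
    and F_le: "\<forall>x. F x \<le> K * norm x"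
    using hahn_banach[OF sublinear_scaled_norm[OF K] Y] by blast
  have F_bound: "\<bar>F x\<bar> \<le> K * norm x" for x
    using F_le[rule_format, of x] F_le[rule_format, of "- x"] linear_neg[OF \<open>linear F\<close>, of x]
    by simp
  have F: "F \<in> dual_sp UNIV"
    unfolding dual_sp_def
    using linear_add[OF \<open>linear F\<close>] linear_scale[OF \<open>linear F\<close>] F_bound by auto
  have restrict: "dual_restrict Y F = f"
    using F_ext f unfolding dual_restrict_def dual_sp_def by auto
  have "dnorm UNIV F \<le> K"
    using dnorm_le[of UNIV K F] K F_bound by simp
  moreover have "K \<le> dnorm UNIV F"
    using dnorm_mono[OF _ subspace_0[OF Y] F] dnorm_dual_restrict[of Y F]
    unfolding K_def restrict by simp
  ultimately show ?thesis
    using F restrict unfolding K_def by auto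
qed

section \<open>Property-(HB) projections\<close>

locale HB_projection =
  fixes V E :: "'a::real_normed_vector set" and P :: "('a \<Rightarrow> real) \<Rightarrow> 'a \<Rightarrow> real"
  assumes proj_dual: "\<forall>f\<in>dual_sp E. P f \<in> dual_sp E"
    and proj_add: "\<forall>f\<in>dual_sp E. \<forall>g\<in>dual_sp E. P (\<lambda>x. f x + g x) = (\<lambda>x. P f x + P g x)"
    and proj_scale: "\<forall>c. \<forall>f\<in>dual_sp E. P (\<lambda>x. c * f x) = (\<lambda>x. c * P f x)"
    and proj_idem: "\<forall>f\<in>dual_sp E. P (P f) = P f"
    and proj_range: "P ` dual_sp E = annih V E"
    and proj_norm: "\<forall>f\<in>dual_sp E. dnorm E (P f) \<le> dnorm E f"
    and proj_strict: "\<forall>g\<in>{(\<lambda>x. f x - P f x) | f. f \<in> dual_sp E}. \<forall>w\<in>annih V E. w \<noteq> (\<lambda>x. 0) \<longrightarrow>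
          dnorm E (\<lambda>x. g x + w x) > dnorm E g \<and> dnorm E (\<lambda>x. g x + w x) \<ge> dnorm E w"

lemma has_HB_iff_HB_projection: "has_HB V E \<longleftrightarrow> (\<exists>P. HB_projection V E P)"
  unfolding has_HB_def HB_projection_def by (simp only: conj_assoc)

context HB_projection
begin

lemma proj_annih: "F \<in> dual_sp E \<Longrightarrow> P F \<in> annih V E"
  using proj_range by blast

lemma proj_fixes_annih:
  assumes "W \<in> annih V E"
  shows "P W = W"
proof -
  obtain H where "H \<in> dual_sp E" "W = P H"
    using assms proj_range by blast
  then show ?thesis
    using proj_idem by simp
qed

lemma proj_diff:
  assumes "F \<in> dual_sp E" "H \<in> dual_sp E"
  shows "P (\<lambda>x. F x - H x) = (\<lambda>x. P F x - P H x)"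
proof -
  have "P (\<lambda>x. F x - H x) = P (\<lambda>x. F x + (-1) * H x)"
    by simp
  also have "\<dots> = (\<lambda>x. P F x + P (\<lambda>x. (-1) * H x) x)"
    using proj_add[rule_format, OF assms(1) dual_sp_scale[OF assms(2)], of "-1"] .
  also have "\<dots> = (\<lambda>x. P F x - P H x)"
    using proj_scale[rule_format, OF assms(2), of "-1"] by simp
  finally show ?thesis .
qed

lemma proj_diff_if_agree:
  assumes "F \<in> dual_sp E" "H \<in> dual_sp E" "\<forall>z\<in>V. F z = H z"
  shows "P F x - P H x = F x - H x"
proof -
  have "(\<lambda>x. F x - H x) \<in> annih V E"
    using assms dual_sp_diff unfolding annih_def by auto
  then have "P (\<lambda>x. F x - H x) = (\<lambda>x. F x - H x)"
    by (rule proj_fixes_annih)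
  then show ?thesis
    using proj_diff[OF assms(1,2)] by metis
qed

lemma complement_norm_strict:
  assumes F: "F \<in> dual_sp E" and H: "H \<in> dual_sp E"
    and agree: "\<forall>z\<in>V. H z = F z - P F z" and ne: "H \<noteq> (\<lambda>x. F x - P F x)"
  shows "dnorm E (\<lambda>x. F x - P F x) < dnorm E H
    \<and> dnorm E (\<lambda>x. H x - (F x - P F x)) \<le> dnorm E H"
proof -
  define G where "G = (\<lambda>x. F x - P F x)"
  define W where "W = (\<lambda>x. H x - G x)"
  have "G \<in> dual_sp E"
    unfolding G_def using F proj_dual dual_sp_diff by blast
  then have "W \<in> annih V E"
    using H agree dual_sp_diff unfolding W_def G_def annih_def by auto
  moreover have "W \<noteq> (\<lambda>x. 0)"
    using ne unfolding W_def G_def by (auto simp: fun_eq_iff)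
  moreover have "G \<in> {(\<lambda>x. f x - P f x) | f. f \<in> dual_sp E}"
    unfolding G_def using F by blast
  moreover have "(\<lambda>x. G x + W x) = H"
    unfolding W_def by simp
  ultimately show ?thesis
    using proj_strict unfolding G_def W_def by fastforce
qed

lemma complement_norm_minimal:
  assumes "F \<in> dual_sp E" "H \<in> dual_sp E" "\<forall>z\<in>V. H z = F z - P F z"
  shows "dnorm E (\<lambda>x. F x - P F x) \<le> dnorm E H"
  using complement_norm_strict[OF assms] by (cases "H = (\<lambda>x. F x - P F x)") auto

end

section \<open>Restricting an (HB)-projection to a subspace\<close>

locale HB_restriction = HB_projection Z UNIV P
  for Z :: "'a::real_normed_vector set" and P +
  fixes Y :: "'a set"
  assumes subspace_Y: "subspace Y" and Z_subset_Y: "Z \<subseteq> Y"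
begin

definition restricted_proj :: "('a \<Rightarrow> real) \<Rightarrow> 'a \<Rightarrow> real" where
  "restricted_proj f = dual_restrict Y (P (SOME F. F \<in> dual_sp UNIV \<and> dual_restrict Y F = f))"

lemma restricted_proj_eq:
  assumes F: "F \<in> dual_sp UNIV" and f: "dual_restrict Y F = f"
  shows "restricted_proj f = dual_restrict Y (P F)"
proof -
  define F0 where "F0 = (SOME F0. F0 \<in> dual_sp UNIV \<and> dual_restrict Y F0 = f)"
  have F0: "F0 \<in> dual_sp UNIV" "dual_restrict Y F0 = f"
    unfolding F0_def using someI[of "\<lambda>F0. F0 \<in> dual_sp UNIV \<and> dual_restrict Y F0 = f"] F f
    by blast+
  have "F0 x = F x" if "x \<in> Y" for x
    using fun_cong[OF F0(2), of x] fun_cong[OF f, of x] that unfolding dual_restrict_def by simp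
  then have "P F0 x = P F x" if "x \<in> Y" for x
    using proj_diff_if_agree[OF F0(1) F, of x] Z_subset_Y that by auto
  then have "dual_restrict Y (P F0) = dual_restrict Y (P F)"
    unfolding dual_restrict_def by auto
  then show ?thesis
    unfolding restricted_proj_def F0_def .
qed

lemma restricted_proj_annih:
  assumes "f \<in> dual_sp Y"
  shows "restricted_proj f \<in> annih Z Y"
proof -
  obtain F where F: "F \<in> dual_sp UNIV" "dual_restrict Y F = f"
    using norm_preserving_extension[OF subspace_Y assms] by blast
  have "P F \<in> annih Z UNIV"
    using proj_annih[OF F(1)] .
  then show ?thesis
    using restricted_proj_eq[OF F] dual_restrict_in_dual_sp[OF subspace_Y, of UNIV "P F"] Z_subset_Y
    unfolding annih_def dual_restrict_def by auto
qed

lemma restricted_proj_add: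
  assumes f: "f \<in> dual_sp Y" and g: "g \<in> dual_sp Y"
  shows "restricted_proj (\<lambda>x. f x + g x) = (\<lambda>x. restricted_proj f x + restricted_proj g x)"
proof -
  obtain F G where F: "F \<in> dual_sp UNIV" "dual_restrict Y F = f"
    and G: "G \<in> dual_sp UNIV" "dual_restrict Y G = g"
    using norm_preserving_extension[OF subspace_Y] f g by metis
  have "dual_restrict Y (\<lambda>x. F x + G x) = (\<lambda>x. f x + g x)"
    using F(2) G(2) unfolding dual_restrict_def by auto
  then have "restricted_proj (\<lambda>x. f x + g x) = dual_restrict Y (P (\<lambda>x. F x + G x))"
    using restricted_proj_eq dual_sp_add[OF F(1) G(1)] by blast
  also have "\<dots> = (\<lambda>x. restricted_proj f x + restricted_proj g x)"
    using proj_add F(1) G(1) restricted_proj_eq[OF F] restricted_proj_eq[OF G]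
    unfolding dual_restrict_def by auto
  finally show ?thesis .
qed

lemma restricted_proj_scale:
  assumes f: "f \<in> dual_sp Y"
  shows "restricted_proj (\<lambda>x. c * f x) = (\<lambda>x. c * restricted_proj f x)"
proof -
  obtain F where F: "F \<in> dual_sp UNIV" "dual_restrict Y F = f"
    using norm_preserving_extension[OF subspace_Y f] by blast
  have "dual_restrict Y (\<lambda>x. c * F x) = (\<lambda>x. c * f x)"
    using F(2) unfolding dual_restrict_def by auto
  then have "restricted_proj (\<lambda>x. c * f x) = dual_restrict Y (P (\<lambda>x. c * F x))"
    using restricted_proj_eq dual_sp_scale[OF F(1)] by blast
  also have "\<dots> = (\<lambda>x. c * restricted_proj f x)"
    using proj_scale F(1) restricted_proj_eq[OF F] unfolding dual_restrict_def by auto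
  finally show ?thesis .
qed

lemma restricted_proj_fixes_annih:
  assumes h: "h \<in> annih Z Y"
  shows "restricted_proj h = h"
proof -
  have "h \<in> dual_sp Y"
    using h unfolding annih_def by blast
  then obtain H where H: "H \<in> dual_sp UNIV" "dual_restrict Y H = h"
    using norm_preserving_extension[OF subspace_Y] by blast
  have "H z = 0" if "z \<in> Z" for z
    using fun_cong[OF H(2), of z] h that Z_subset_Y unfolding annih_def dual_restrict_def by auto
  then have "P H = H"
    using H(1) proj_fixes_annih unfolding annih_def by blast
  then show ?thesis
    using restricted_proj_eq[OF H] H(2) by simp
qed

lemma restricted_proj_norm:
  assumes f: "f \<in> dual_sp Y"
  shows "dnorm Y (restricted_proj f) \<le> dnorm Y f"
proof -
  obtain F where F: "F \<in> dual_sp UNIV" "dual_restrict Y F = f" "dnorm UNIV F = dnorm Y f"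
    using norm_preserving_extension[OF subspace_Y f] by blast
  have "dnorm Y (restricted_proj f) = dnorm Y (P F)"
    using restricted_proj_eq[OF F(1,2)] dnorm_dual_restrict by simp
  also have "\<dots> \<le> dnorm UNIV (P F)"
    using dnorm_mono[OF subset_UNIV subspace_0[OF subspace_Y]] proj_dual F(1) by blast
  also have "\<dots> \<le> dnorm UNIV F"
    using proj_norm F(1) by blast
  finally show ?thesis
    using F(3) by simp
qed

lemma restricted_complement:
  assumes F: "F \<in> dual_sp UNIV" and f: "dual_restrict Y F = f"
  shows "(\<lambda>x. f x - restricted_proj f x) = dual_restrict Y (\<lambda>x. F x - P F x)"
  using restricted_proj_eq[OF F f] f unfolding dual_restrict_def by auto

lemma dnorm_restricted_complement:
  assumes F: "F \<in> dual_sp UNIV"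
  shows "dnorm Y (dual_restrict Y (\<lambda>x. F x - P F x)) = dnorm UNIV (\<lambda>x. F x - P F x)"
proof (rule antisym)
  have G: "(\<lambda>x. F x - P F x) \<in> dual_sp UNIV"
    using F proj_dual dual_sp_diff by blast
  show "dnorm Y (dual_restrict Y (\<lambda>x. F x - P F x)) \<le> dnorm UNIV (\<lambda>x. F x - P F x)"
    unfolding dnorm_dual_restrict by (rule dnorm_mono[OF subset_UNIV subspace_0[OF subspace_Y] G])
  obtain H where H: "H \<in> dual_sp UNIV" "dual_restrict Y H = dual_restrict Y (\<lambda>x. F x - P F x)"
    and norm_H: "dnorm UNIV H = dnorm Y (dual_restrict Y (\<lambda>x. F x - P F x))"
    using norm_preserving_extension[OF subspace_Y dual_restrict_in_dual_sp[OF subspace_Y _ G]]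
    by blast
  have "\<forall>z\<in>Z. H z = F z - P F z"
    using H(2) Z_subset_Y unfolding dual_restrict_def by (metis subsetD)
  then show "dnorm UNIV (\<lambda>x. F x - P F x) \<le> dnorm Y (dual_restrict Y (\<lambda>x. F x - P F x))"
    using complement_norm_minimal[OF F H(1)] norm_H by simp
qed


lemma restricted_proj_strict:
  assumes f: "f \<in> dual_sp Y" and g: "g = (\<lambda>x. f x - restricted_proj f x)"
    and w: "w \<in> annih Z Y" and w_ne: "w \<noteq> (\<lambda>x. 0)"
  shows "dnorm Y g < dnorm Y (\<lambda>x. g x + w x) \<and> dnorm Y w \<le> dnorm Y (\<lambda>x. g x + w x)"
proof -
  obtain F where F: "F \<in> dual_sp UNIV" "dual_restrict Y F = f"
    using norm_preserving_extension[OF subspace_Y f] by blast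
  define G where "G = (\<lambda>x. F x - P F x)"
  have g_G: "g = dual_restrict Y G"
    unfolding g G_def using restricted_complement[OF F] .
  have G: "G \<in> dual_sp UNIV"
    unfolding G_def using F(1) proj_dual dual_sp_diff by blast
  have w_dual: "w \<in> dual_sp Y" and w_Z: "\<forall>z\<in>Z. w z = 0"
    using w unfolding annih_def by auto
  have "(\<lambda>x. g x + w x) \<in> dual_sp Y"
    using dual_sp_add[OF _ w_dual] dual_restrict_in_dual_sp[OF subspace_Y subset_UNIV G] g_G by simp
  then obtain K where K: "K \<in> dual_sp UNIV" "dual_restrict Y K = (\<lambda>x. g x + w x)"
    and norm_K: "dnorm UNIV K = dnorm Y (\<lambda>x. g x + w x)"
    using norm_preserving_extension[OF subspace_Y] by blast
  have K_Y: "K x = G x + w x" if "x \<in> Y" for x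
    using fun_cong[OF K(2), of x] that unfolding g_G dual_restrict_def by simp
  then have "\<forall>z\<in>Z. K z = F z - P F z"
    using w_Z Z_subset_Y unfolding G_def by auto
  moreover have "K \<noteq> G"
  proof
    assume "K = G"
    then have "w x = 0" for x
      using K_Y w_dual unfolding dual_sp_def by (cases "x \<in> Y") auto
    then show False
      using w_ne by auto
  qed
  ultimately have strict: "dnorm UNIV G < dnorm UNIV K" "dnorm UNIV (\<lambda>x. K x - G x) \<le> dnorm UNIV K"
    using complement_norm_strict[OF F(1) K(1)] unfolding G_def by auto
  have "w = dual_restrict Y (\<lambda>x. K x - G x)"
    using K_Y w_dual unfolding dual_restrict_def dual_sp_def by auto
  then have "dnorm Y w = dnorm Y (\<lambda>x. K x - G x)"
    by (simp only: dnorm_dual_restrict)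
  also have "\<dots> \<le> dnorm UNIV (\<lambda>x. K x - G x)"
    by (rule dnorm_mono[OF subset_UNIV subspace_0[OF subspace_Y] dual_sp_diff[OF K(1) G]])
  finally have "dnorm Y w \<le> dnorm UNIV (\<lambda>x. K x - G x)" .
  moreover have "dnorm Y g = dnorm UNIV G"
    unfolding g_G G_def using dnorm_restricted_complement[OF F(1)] .
  ultimately show ?thesis
    using strict norm_K by linarith
qed

theorem HB_projection_restricted: "HB_projection Z Y restricted_proj"
proof -
  have range: "restricted_proj ` dual_sp Y = annih Z Y"
  proof
    show "restricted_proj ` dual_sp Y \<subseteq> annih Z Y"
      using restricted_proj_annih by blast
    show "annih Z Y \<subseteq> restricted_proj ` dual_sp Y"
      using restricted_proj_fixes_annih unfolding annih_def by (metis (no_types, lifting) image_eqI mem_Collect_eq subsetI)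
  qed
  show ?thesis
    unfolding HB_projection_def
  proof (intro conjI ballI allI impI)
    fix f assume "f \<in> dual_sp Y"
    then show "restricted_proj f \<in> dual_sp Y"
      using restricted_proj_annih unfolding annih_def by blast
  next
    fix f g assume "f \<in> dual_sp Y" "g \<in> dual_sp Y"
    then show "restricted_proj (\<lambda>x. f x + g x) = (\<lambda>x. restricted_proj f x + restricted_proj g x)"
      by (rule restricted_proj_add)
  next
    fix c f assume "f \<in> dual_sp Y"
    then show "restricted_proj (\<lambda>x. c * f x) = (\<lambda>x. c * restricted_proj f x)"
      by (rule restricted_proj_scale)
  next
    fix f assume "f \<in> dual_sp Y"
    then show "restricted_proj (restricted_proj f) = restricted_proj f"
      using restricted_proj_annih restricted_proj_fixes_annih by blast
  next
    fix f assume "f \<in> dual_sp Y"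
    then show "dnorm Y (restricted_proj f) \<le> dnorm Y f"
      by (rule restricted_proj_norm)
  next
    fix g w assume "g \<in> {(\<lambda>x. f x - restricted_proj f x) | f. f \<in> dual_sp Y}"
      and "w \<in> annih Z Y" "w \<noteq> (\<lambda>x. 0)"
    then show "dnorm Y g < dnorm Y (\<lambda>x. g x + w x)" "dnorm Y w \<le> dnorm Y (\<lambda>x. g x + w x)"
      using restricted_proj_strict by blast+
  qed (rule range)
qed

end

theorem theorem3p14:
  fixes Y Z :: "'a::banach set"
  assumes "subspace Y" and "closed Y"
    and "subspace Z" and "closed Z"
    and "Z \<subseteq> Y"
    and "has_HB Z (UNIV :: 'a set)"
  shows "has_HB Z Y"
proof -
  obtain P where "HB_projection Z UNIV P"
    using assms(6) has_HB_iff_HB_projection by blast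
  then have "HB_restriction Z P Y"
    using assms(1,5) by (simp add: HB_restriction_def HB_restriction_axioms_def)
  then show ?thesis
    using HB_restriction.HB_projection_restricted has_HB_iff_HB_projection by blast
qed

end
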